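(* Let $n\ge 2$ and let $A\subset S^n=\{x\in\mathbb R^{n+1}:\|x\|=1\}$ be a closed subset with $0<\mathrm{diam}(A)\le 1$ (diameter with respect to the Euclidean metric). Then there is an isometry $f\in\mathsf{SO}(n+1)$ such that the family $\{A,f(A),f^2(A)\}$ is linked but not centered, i.e. any two of $A,f(A),f^2(A)$ intersect but $A\cap f(A)\cap f^2(A)=\emptyset$.
   Context: $\mathsf{SO}(n+1)$ denotes the group of orientation-preserving linear isometries of $\mathbb R^{n+1}$. A family of sets is linked if any two members intersect, and centered if every finite subfamily has nonempty intersection. *)

theory Defs
  imports "HOL-Analysis.Analysis"
begin

definition SO :: "((real^'n) \<Rightarrow> (real^'n)) set" where
  "SO = {f. orthogonal_transformation f \<and> det (matrix f) = 1}"

definition unit_sphere :: "(real^'n) set" where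
  "unit_sphere = {x. norm x = 1}"

end

theory Submission
  imports Defs
begin

text \<open>
  It suffices to find p \<noteq> q in A and a rotation f by 2\<pi>/3 in some plane with f p = q, such that
  that plane contains a vector e with 0 < x \<bullet> e for all x \<in> A. Then q, p = f (f q) and f q
  witness the pairwise intersections, while a point z of all three sets would have its whole
  orbit z, f z, f (f z) in A, although the three values z \<bullet> e, f z \<bullet> e, f (f z) \<bullet> e sum to 0.

  Since diam A \<le> 1, x \<bullet> y \<ge> 1/2 for all x, y \<in> A; given p, q, the admissible e
  are cut out by a single quadratic equation, which fails one way for e = x and the other way
  for a supporting normal of A at a point p along which some q \<in> A leaves p at an angle below
  30 degrees. The intermediate value theorem gives e on the segment between them. A shallow
  supporting normal exists because otherwise supporting normals at p would be stable under
  perturbations of relative size 1/2 orthogonal to p, so a supporting normal u could be rotated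
  through a unit vector orthogonal to p and u (this needs n \<ge> 2) into -u, squeezing A into the
  hyperplane orthogonal to u, where angles of at least 30 degrees leave no point but p.
\<close>

definition plane_rotation :: "'a::real_inner \<Rightarrow> 'a \<Rightarrow> real \<Rightarrow> 'a \<Rightarrow> 'a" where
  "plane_rotation a b \<theta> x =
     x + ((cos \<theta> - 1) * (x \<bullet> a) - sin \<theta> * (x \<bullet> b)) *\<^sub>R a
       + (sin \<theta> * (x \<bullet> a) + (cos \<theta> - 1) * (x \<bullet> b)) *\<^sub>R b"

lemma linear_plane_rotation: "linear (plane_rotation a b \<theta>)"
  by (rule linearI)
    (simp_all add: plane_rotation_def algebra_simps)

lemma plane_rotation_two_pi [simp]: "plane_rotation a b (2 * pi) x = x"
  by (simp add: plane_rotation_def)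

locale orthonormal_pair =
  fixes a b :: "'a::real_inner"
  assumes norm_a: "a \<bullet> a = 1" and norm_b: "b \<bullet> b = 1" and orth: "a \<bullet> b = 0"
begin

lemma orth_commute: "b \<bullet> a = 0"
  using orth by (simp add: inner_commute)

lemma inner_plane_rotation_a:
  "plane_rotation a b \<theta> x \<bullet> a = cos \<theta> * (x \<bullet> a) - sin \<theta> * (x \<bullet> b)"
  by (simp add: plane_rotation_def norm_a orth_commute algebra_simps)

lemma inner_plane_rotation_b:
  "plane_rotation a b \<theta> x \<bullet> b = sin \<theta> * (x \<bullet> a) + cos \<theta> * (x \<bullet> b)"
  by (simp add: plane_rotation_def norm_b orth algebra_simps)

lemma plane_rotation_add:
  "plane_rotation a b \<theta> (plane_rotation a b \<phi> x) = plane_rotation a b (\<theta> + \<phi>) x"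
proof -
  let ?y = "plane_rotation a b \<phi> x"
  have "plane_rotation a b \<theta> ?y =
     ?y + ((cos \<theta> - 1) * (?y \<bullet> a) - sin \<theta> * (?y \<bullet> b)) *\<^sub>R a
       + (sin \<theta> * (?y \<bullet> a) + (cos \<theta> - 1) * (?y \<bullet> b)) *\<^sub>R b"
    by (rule plane_rotation_def)
  also have "\<dots> = plane_rotation a b (\<theta> + \<phi>) x"
    unfolding inner_plane_rotation_a inner_plane_rotation_b
    by (simp add: plane_rotation_def cos_add sin_add algebra_simps)
  finally show ?thesis .
qed

lemma inner_plane_rotation_self:
  "plane_rotation a b \<theta> x \<bullet> plane_rotation a b \<theta> x = x \<bullet> x"
proof -
  have "plane_rotation a b \<theta> x \<bullet> plane_rotation a b \<theta> x
        = x \<bullet> x + ((cos \<theta>)\<^sup>2 + (sin \<theta>)\<^sup>2 - 1) * ((x \<bullet> a)\<^sup>2 + (x \<bullet> b)\<^sup>2)"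
    unfolding plane_rotation_def
    by (simp add: norm_a norm_b orth orth_commute inner_commute[of a x] inner_commute[of b x]
        algebra_simps power2_eq_square del: sin_cos_squared_add2 sin_cos_squared_add3)
  then show ?thesis
    by simp
qed

lemma norm_plane_rotation: "norm (plane_rotation a b \<theta> x) = norm x"
  by (simp add: norm_eq_sqrt_inner inner_plane_rotation_self)

lemma plane_rotation_third_turn_cube:
  "plane_rotation a b (2*pi/3) (plane_rotation a b (2*pi/3) (plane_rotation a b (2*pi/3) x)) = x"
  by (simp add: plane_rotation_add)

lemma plane_rotation_third_turn_orbit_sum:
  assumes "e = u *\<^sub>R a + v *\<^sub>R b"
  shows "x \<bullet> e + plane_rotation a b (2*pi/3) x \<bullet> e
           + plane_rotation a b (2*pi/3) (plane_rotation a b (2*pi/3) x) \<bullet> e = 0"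
  using assms
  by (simp add: inner_add_right inner_plane_rotation_a inner_plane_rotation_b cos_120 sin_120)
    (simp add: field_simps)

lemma plane_rotation_third_turn_maps:
  assumes "p - q = d *\<^sub>R a" and "p \<bullet> a = d / 2" and "p \<bullet> b = d * sqrt 3 / 6"
  shows "plane_rotation a b (2*pi/3) p = q"
proof -
  have "plane_rotation a b (2*pi/3) p = p + (- d) *\<^sub>R a + 0 *\<^sub>R b"
    unfolding plane_rotation_def cos_120 sin_120 assms(2,3)
    by (simp add: field_simps)
  with assms(1) show ?thesis
    by (simp add: algebra_simps)
qed

end

lemma plane_rotation_in_SO:
  fixes a b :: "real^'n"
  assumes "orthonormal_pair a b"
  shows "plane_rotation a b \<theta> \<in> SO"
proof -
  interpret orthonormal_pair a b by (fact assms)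
  let ?R = "\<lambda>\<theta>. matrix (plane_rotation a b \<theta>)"
  have orthogonal: "orthogonal_transformation (plane_rotation a b \<theta>)"
    by (simp add: orthogonal_transformation linear_plane_rotation norm_plane_rotation)
  have "plane_rotation a b \<theta> = plane_rotation a b (\<theta>/2) \<circ> plane_rotation a b (\<theta>/2)"
    by (rule ext) (simp add: plane_rotation_add)
  then have "?R \<theta> = ?R (\<theta>/2) ** ?R (\<theta>/2)"
    by (metis linear_plane_rotation matrix_compose)
  then have "det (?R \<theta>) \<ge> 0"
    by (simp add: det_mul)
  moreover have "\<bar>det (?R \<theta>)\<bar> = 1"
    using orthogonal by simp
  ultimately show ?thesis
    using orthogonal by (simp add: SO_def)
qed

text \<open>Together with 0 < (p + q) \<bullet> e, this says that e lies in the plane of a rotation by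
  2\<pi>/3 carrying p to q.\<close>

definition third_turn_compatible :: "'a::real_inner \<Rightarrow> 'a \<Rightarrow> 'a \<Rightarrow> bool" where
  "third_turn_compatible p q e \<longleftrightarrow>
     (norm (p - q))\<^sup>2 * (e \<bullet> e) = 3 * ((p + q) \<bullet> e)\<^sup>2 + ((p - q) \<bullet> e)\<^sup>2"

lemma orthonormal_pair_extend:
  fixes a e :: "'a::real_inner"
  assumes "a \<bullet> a = 1" and "e - (e \<bullet> a) *\<^sub>R a \<noteq> 0"
  obtains b where "orthonormal_pair a b" and "e = (e \<bullet> a) *\<^sub>R a + norm (e - (e \<bullet> a) *\<^sub>R a) *\<^sub>R b"
proof
  define w where "w = e - (e \<bullet> a) *\<^sub>R a"
  have "a \<bullet> w = 0"
    by (simp add: w_def inner_diff_right \<open>a \<bullet> a = 1\<close> inner_commute)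
  then show "orthonormal_pair a (w /\<^sub>R norm w)"
    using assms by unfold_locales (simp_all add: w_def divide_simps dot_square_norm)
  show "e = (e \<bullet> a) *\<^sub>R a + norm w *\<^sub>R (w /\<^sub>R norm w)"
    using assms by (simp add: w_def)
qed

lemma inner_diff_if_norm_eq:
  fixes p q :: "'a::real_inner"
  assumes "norm p = norm q"
  shows "p \<bullet> (p - q) = (norm (p - q))\<^sup>2 / 2"
proof -
  have "p \<bullet> p = q \<bullet> q"
    using assms by (simp add: dot_square_norm)
  then show ?thesis
    by (simp add: power2_norm_eq_inner inner_diff_left inner_diff_right inner_commute)
qed

lemma third_turn_compatible_orthogonal_part:
  fixes p q e a :: "'a::real_inner"
  assumes "third_turn_compatible p q e" and pos: "0 < (p + q) \<bullet> e"
    and "a \<bullet> a = 1" and pq: "p - q = d *\<^sub>R a" and "0 < d"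
  shows "d * norm (e - (e \<bullet> a) *\<^sub>R a) = sqrt 3 * ((p + q) \<bullet> e)"
proof -
  define N where "N = norm (e - (e \<bullet> a) *\<^sub>R a)"
  have "norm (p - q) = d"
    using \<open>a \<bullet> a = 1\<close> \<open>0 < d\<close> by (simp add: pq norm_eq_sqrt_inner)
  have "(p - q) \<bullet> e = d * (e \<bullet> a)"
    by (simp add: pq inner_commute)
  have "N\<^sup>2 = e \<bullet> e - (e \<bullet> a)\<^sup>2"
    unfolding N_def power2_norm_eq_inner
    by (simp add: inner_diff_left inner_diff_right \<open>a \<bullet> a = 1\<close> inner_commute power2_eq_square)
  then have "(d * N)\<^sup>2 = d\<^sup>2 * (e \<bullet> e) - (d * (e \<bullet> a))\<^sup>2"
    by (simp add: power_mult_distrib right_diff_distrib)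
  also have "\<dots> = (norm (p - q))\<^sup>2 * (e \<bullet> e) - ((p - q) \<bullet> e)\<^sup>2"
    unfolding \<open>norm (p - q) = d\<close> \<open>(p - q) \<bullet> e = d * (e \<bullet> a)\<close> ..
  also have "\<dots> = (sqrt 3 * ((p + q) \<bullet> e))\<^sup>2"
    using \<open>third_turn_compatible p q e\<close>
    by (simp add: third_turn_compatible_def power_mult_distrib)
  finally show ?thesis
    using pos \<open>0 < d\<close> by (simp add: power2_eq_iff_nonneg N_def)
qed

lemma exists_third_turn_rotation:
  fixes p q e :: "'a::real_inner"
  assumes "norm p = norm q" and "p \<noteq> q" and pos: "0 < (p + q) \<bullet> e"
    and "third_turn_compatible p q e"
  shows "\<exists>a b u v. orthonormal_pair a b \<and> e = u *\<^sub>R a + v *\<^sub>R b \<and>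
           plane_rotation a b (2*pi/3) p = q"
proof -
  define d where "d = norm (p - q)"
  define s where "s = (p + q) \<bullet> e"
  define a where "a = (1/d) *\<^sub>R (p - q)"
  define N where "N = norm (e - (e \<bullet> a) *\<^sub>R a)"
  have "d > 0"
    using \<open>p \<noteq> q\<close> by (simp add: d_def)
  have aa: "a \<bullet> a = 1"
    using \<open>d > 0\<close> by (simp add: a_def d_def power2_norm_eq_inner[symmetric] power2_eq_square)
  have pa: "p \<bullet> a = d / 2"
    using \<open>d > 0\<close> inner_diff_if_norm_eq[OF \<open>norm p = norm q\<close>]
    by (simp add: a_def d_def power2_eq_square)
  have pq: "p - q = d *\<^sub>R a"
    using \<open>d > 0\<close> by (simp add: a_def)
  have dN: "d * N = sqrt 3 * s"
    unfolding N_def s_def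
    by (rule third_turn_compatible_orthogonal_part[OF \<open>third_turn_compatible p q e\<close> pos aa pq
          \<open>d > 0\<close>])
  then have "d * N > 0"
    using pos by (simp add: s_def)
  then have "N > 0"
    using \<open>d > 0\<close> by (simp add: zero_less_mult_iff)
  then have w: "e - (e \<bullet> a) *\<^sub>R a \<noteq> 0"
    by (auto simp: N_def)
  obtain b where "orthonormal_pair a b" and e: "e = (e \<bullet> a) *\<^sub>R a + N *\<^sub>R b"
    by (rule orthonormal_pair_extend[OF aa w, folded N_def])
  have "p \<bullet> b = d * sqrt 3 / 6"
  proof -
    have "p \<bullet> e = (e \<bullet> a) * (p \<bullet> a) + N * (p \<bullet> b)"
      by (subst e) (simp add: inner_add_right)
    moreover have "2 * ((e \<bullet> a) * (p \<bullet> a)) = (p - q) \<bullet> e"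
      unfolding pq pa by (simp add: inner_commute[of a e])
    ultimately have "2 * (N * (p \<bullet> b)) = s"
      unfolding s_def inner_add_left inner_diff_left by linarith
    then have "p \<bullet> b = s / (2 * N)"
      using \<open>N > 0\<close> by (simp add: field_simps)
    moreover have "d = sqrt 3 * s / N"
      using dN \<open>N > 0\<close> by (simp add: field_simps)
    ultimately show ?thesis
      by (simp add: field_simps)
  qed
  with \<open>orthonormal_pair a b\<close> pq pa have "plane_rotation a b (2*pi/3) p = q"
    by (intro orthonormal_pair.plane_rotation_third_turn_maps)
  with \<open>orthonormal_pair a b\<close> e show ?thesis
    by blast
qed

definition supporting_normal :: "'a::real_inner set \<Rightarrow> 'a \<Rightarrow> 'a \<Rightarrow> bool" where
  "supporting_normal A p v \<longleftrightarrow> v \<bullet> p = 0 \<and> (\<forall>x\<in>A. 0 \<le> x \<bullet> v)"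

lemma supporting_normal_perturb:
  assumes v: "supporting_normal A p v"
    and steep: "\<forall>x\<in>A. x \<noteq> p \<longrightarrow> (norm (x - p))\<^sup>2 * (v \<bullet> v) \<le> 4 * (x \<bullet> v)\<^sup>2"
    and "w \<bullet> p = 0" and close: "norm (w - v) \<le> norm v / 2"
  shows "supporting_normal A p w"
  unfolding supporting_normal_def
proof (intro conjI ballI)
  show "w \<bullet> p = 0" by fact
  fix x assume "x \<in> A"
  show "0 \<le> x \<bullet> w"
  proof (cases "x = p")
    case True
    then show ?thesis using \<open>w \<bullet> p = 0\<close> by (simp add: inner_commute)
  next
    case False
    have "0 \<le> x \<bullet> v"
      using v \<open>x \<in> A\<close> by (simp add: supporting_normal_def)
    have "(norm (x - p) * norm v)\<^sup>2 \<le> (2 * (x \<bullet> v))\<^sup>2"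
      using steep \<open>x \<in> A\<close> False by (simp add: power_mult_distrib power2_norm_eq_inner)
    then have far: "norm (x - p) * norm v \<le> 2 * (x \<bullet> v)"
      by (rule power2_le_imp_le) (simp add: \<open>0 \<le> x \<bullet> v\<close>)
    have "(x - p) \<bullet> (v - w) \<le> norm (x - p) * norm (v - w)"
      by (rule norm_cauchy_schwarz)
    also have "\<dots> \<le> norm (x - p) * (norm v / 2)"
      using close by (intro mult_left_mono) (simp_all add: norm_minus_commute)
    finally have "(x - p) \<bullet> (v - w) \<le> norm (x - p) * norm v / 2"
      by simp
    moreover have "x \<bullet> w = x \<bullet> v - (x - p) \<bullet> (v - w)"
      using v \<open>w \<bullet> p = 0\<close>
      by (simp add: supporting_normal_def inner_diff_left inner_diff_right inner_commute)
    ultimately show ?thesis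
      using far by linarith
  qed
qed

lemma supporting_normal_rotate:
  assumes steep: "\<forall>v. supporting_normal A p v \<longrightarrow>
                    (\<forall>x\<in>A. x \<noteq> p \<longrightarrow> (norm (x - p))\<^sup>2 * (v \<bullet> v) \<le> 4 * (x \<bullet> v)\<^sup>2)"
    and "orthonormal_pair u z" and "z \<bullet> p = 0" and u: "supporting_normal A p u"
  shows "supporting_normal A p z"
proof -
  interpret orthonormal_pair u z by fact
  define V where "V t = (1 - t) *\<^sub>R u + t *\<^sub>R z" for t
  have VV: "V r \<bullet> V s = (1 - r) * (1 - s) + r * s" for r s
    by (simp add: V_def norm_a norm_b orth orth_commute algebra_simps)
  have "V t \<bullet> p = 0" for t
    using u \<open>z \<bullet> p = 0\<close> by (simp add: V_def supporting_normal_def inner_add_left)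
  have close: "norm (V (t + 1/4) - V t) \<le> norm (V t) / 2" for t
  proof (rule power2_le_imp_le)
    have "(norm (V (t + 1/4) - V t))\<^sup>2 = 1/8"
      by (simp add: power2_norm_eq_inner VV algebra_simps)
    also have "\<dots> \<le> ((1 - t) * (1 - t) + t * t) / 4"
      using zero_le_power2[of "t - 1/2"] by (simp add: power2_eq_square algebra_simps)
    also have "\<dots> = (norm (V t) / 2)\<^sup>2"
      by (simp add: power_divide power2_norm_eq_inner VV)
    finally show "(norm (V (t + 1/4) - V t))\<^sup>2 \<le> (norm (V t) / 2)\<^sup>2" .
  qed simp
  have step: "supporting_normal A p (V t) \<Longrightarrow> supporting_normal A p (V (t + 1/4))" for t
    using steep close \<open>\<And>t. V t \<bullet> p = 0\<close> by (blast intro: supporting_normal_perturb)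
  have "supporting_normal A p (V 0)"
    using u by (simp add: V_def)
  then have "supporting_normal A p (V (0 + 1/4 + 1/4 + 1/4 + 1/4))"
    by (intro step)
  then show ?thesis
    by (simp add: V_def)
qed

lemma exists_shallow_supporting_normal:
  fixes A :: "'a::euclidean_space set"
  assumes "DIM('a) \<ge> 3" and "x \<in> A" and "x \<noteq> p" and "e \<noteq> 0" and e: "supporting_normal A p e"
  shows "\<exists>v q. supporting_normal A p v \<and> q \<in> A \<and> q \<noteq> p \<and>
           4 * (q \<bullet> v)\<^sup>2 < (norm (q - p))\<^sup>2 * (v \<bullet> v)"
proof (rule ccontr)
  assume "\<not> ?thesis"
  then have steep: "\<forall>v. supporting_normal A p v \<longrightarrow>
                      (\<forall>x\<in>A. x \<noteq> p \<longrightarrow> (norm (x - p))\<^sup>2 * (v \<bullet> v) \<le> 4 * (x \<bullet> v)\<^sup>2)"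
    by (auto simp: not_less)
  define u where "u = e /\<^sub>R norm e"
  have u: "supporting_normal A p u" and "u \<bullet> u = 1"
    using e \<open>e \<noteq> 0\<close> by (auto simp: u_def supporting_normal_def divide_simps
        power2_norm_eq_inner[symmetric] power2_eq_square)
  have "dim {p, u} \<le> card {p, u}"
    by (rule dim_le_card) (simp_all add: span_base)
  also have "\<dots> < DIM('a)"
    using \<open>DIM('a) \<ge> 3\<close> by (cases "p = u") simp_all
  finally have "dim {p, u} < DIM('a)" .
  then obtain z0 where "z0 \<noteq> 0" and z0: "\<And>y. y \<in> span {p, u} \<Longrightarrow> orthogonal z0 y"
    using orthogonal_to_subspace_exists by blast
  define z where "z = z0 /\<^sub>R norm z0"
  have "z \<bullet> z = 1"
    using \<open>z0 \<noteq> 0\<close> by (simp add: z_def divide_simps power2_norm_eq_inner[symmetric] power2_eq_square)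
  moreover have "z \<bullet> p = 0" "z \<bullet> u = 0"
    using z0[of p] z0[of u] by (simp_all add: z_def orthogonal_def span_base)
  ultimately have "orthonormal_pair u z" "orthonormal_pair z (- u)"
    using \<open>u \<bullet> u = 1\<close> by unfold_locales (simp_all add: inner_commute)
  moreover have "(- u) \<bullet> p = 0"
    using u by (simp add: supporting_normal_def)
  ultimately have "supporting_normal A p (- u)"
    using supporting_normal_rotate[OF steep _ \<open>z \<bullet> p = 0\<close> u]
      supporting_normal_rotate[OF steep] by blast
  then have "x \<bullet> u = 0"
    using u \<open>x \<in> A\<close> unfolding supporting_normal_def by fastforce
  then have "(norm (x - p))\<^sup>2 \<le> 0"
    using steep u \<open>x \<in> A\<close> \<open>x \<noteq> p\<close> \<open>u \<bullet> u = 1\<close> by fastforce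
  with \<open>x \<noteq> p\<close> show False
    by simp
qed

lemma unit_eq_if_inner_ge_1:
  fixes x y :: "'a::real_inner"
  assumes "norm x = 1" and "norm y = 1" and "1 \<le> x \<bullet> y"
  shows "x = y"
proof -
  have "(norm (x - y))\<^sup>2 = 2 - 2 * (x \<bullet> y)"
    using dot_norm_neg[of x y] assms(1,2) by simp
  with assms(3) have "(norm (x - y))\<^sup>2 \<le> 0"
    by linarith
  then show ?thesis
    by simp
qed

lemma inner_ge_half_if_dist_le_1:
  fixes x y :: "'a::real_inner"
  assumes "norm x = 1" and "norm y = 1" and "dist x y \<le> 1"
  shows "1/2 \<le> x \<bullet> y"
proof -
  have "(norm (x - y))\<^sup>2 \<le> 1"
    using assms(3) by (simp add: dist_norm power_le_one)
  then show ?thesis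
    using dot_norm_neg[of x y] assms by simp
qed

lemma exists_supporting_normal:
  fixes A :: "'a::real_inner set"
  assumes "compact A" and unit: "\<forall>x\<in>A. norm x = 1" and "x \<in> A" "y \<in> A" "x \<noteq> y"
    and "c \<noteq> 0" and nonneg: "\<forall>x\<in>A. 0 \<le> x \<bullet> c"
  shows "\<exists>p\<in>A. \<exists>e. e \<noteq> 0 \<and> supporting_normal A p e"
proof -
  have "continuous_on A (\<lambda>z. z \<bullet> c)"
    by (intro continuous_intros)
  then obtain p where "p \<in> A" and min: "\<And>z. z \<in> A \<Longrightarrow> p \<bullet> c \<le> z \<bullet> c"
    using continuous_attains_inf[OF \<open>compact A\<close>] \<open>x \<in> A\<close> by blast
  have "p \<bullet> p = 1"
    using unit \<open>p \<in> A\<close> by (simp add: norm_eq_1)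
  define e where "e = c - (p \<bullet> c) *\<^sub>R p"
  have "supporting_normal A p e"
    unfolding supporting_normal_def
  proof (intro conjI ballI)
    show "e \<bullet> p = 0"
      by (simp add: e_def inner_diff_left \<open>p \<bullet> p = 1\<close> inner_commute[of c p])
    fix z assume "z \<in> A"
    have "z \<bullet> p \<le> 1"
      using norm_cauchy_schwarz[of z p] unit \<open>z \<in> A\<close> \<open>p \<in> A\<close> by simp
    then have "(p \<bullet> c) * (z \<bullet> p) \<le> z \<bullet> c"
      using min[OF \<open>z \<in> A\<close>] nonneg \<open>p \<in> A\<close> by (smt (verit) mult_left_le)
    then show "0 \<le> z \<bullet> e"
      by (simp add: e_def inner_diff_right)
  qed
  moreover have "e \<noteq> 0"
  proof
    assume "e = 0"
    then have c: "c = (p \<bullet> c) *\<^sub>R p"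
      by (simp add: e_def)
    have "z = p" if "z \<in> A" for z
    proof (rule unit_eq_if_inner_ge_1)
      have "p \<bullet> c > 0"
        using c \<open>c \<noteq> 0\<close> nonneg \<open>p \<in> A\<close> by (metis less_eq_real_def scale_zero_left)
      moreover have "p \<bullet> c \<le> (p \<bullet> c) * (z \<bullet> p)"
        using min[OF that] by (subst (asm) (2) c) simp
      ultimately show "1 \<le> z \<bullet> p"
        by simp
    qed (use unit that \<open>p \<in> A\<close> in auto)
    with \<open>x \<in> A\<close> \<open>y \<in> A\<close> \<open>x \<noteq> y\<close> show False
      by blast
  qed
  ultimately show ?thesis
    using \<open>p \<in> A\<close> by blast
qed

lemma exists_third_turn_compatible_between:
  fixes p q e0 e1 :: "'a::real_inner"
  assumes start: "(norm (p - q))\<^sup>2 * (e0 \<bullet> e0) < 3 * ((p + q) \<bullet> e0)\<^sup>2"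
    and "p \<bullet> e1 = 0" and shallow: "4 * (q \<bullet> e1)\<^sup>2 < (norm (q - p))\<^sup>2 * (e1 \<bullet> e1)"
  shows "\<exists>t. 0 \<le> t \<and> t < 1 \<and> third_turn_compatible p q ((1 - t) *\<^sub>R e0 + t *\<^sub>R e1)"
proof -
  define E where "E t = (1 - t) *\<^sub>R e0 + t *\<^sub>R e1" for t
  define G where "G t = (norm (p - q))\<^sup>2 * (E t \<bullet> E t) - 3 * ((p + q) \<bullet> E t)\<^sup>2
                          - ((p - q) \<bullet> E t)\<^sup>2" for t
  have "G 0 = (norm (p - q))\<^sup>2 * (e0 \<bullet> e0) - 3 * ((p + q) \<bullet> e0)\<^sup>2 - ((p - q) \<bullet> e0)\<^sup>2"
    by (simp add: G_def E_def)
  then have "G 0 < 0"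
    using start zero_le_power2[of "(p - q) \<bullet> e0"] by linarith
  moreover have "G 1 > 0"
  proof -
    have "(p + q) \<bullet> e1 = q \<bullet> e1" "(p - q) \<bullet> e1 = - (q \<bullet> e1)"
      using \<open>p \<bullet> e1 = 0\<close> by (simp_all add: inner_add_left inner_diff_left)
    then have "G 1 = (norm (q - p))\<^sup>2 * (e1 \<bullet> e1) - 4 * (q \<bullet> e1)\<^sup>2"
      by (simp add: G_def E_def norm_minus_commute)
    with shallow show ?thesis
      by linarith
  qed
  moreover have "continuous_on {0..1} G"
    unfolding G_def E_def by (intro continuous_intros)
  ultimately obtain t where "0 \<le> t" "t \<le> 1" "G t = 0"
    using IVT'[of G 0 0 1] by auto
  moreover have "t \<noteq> 1"
    using \<open>G t = 0\<close> \<open>G 1 > 0\<close> by auto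
  ultimately show ?thesis
    by (auto simp: third_turn_compatible_def G_def E_def)
qed

lemma exists_positive_third_turn_compatible:
  fixes A :: "'a::euclidean_space set"
  assumes "DIM('a) \<ge> 3" and "compact A" and unit: "\<forall>x\<in>A. norm x = 1"
    and small: "\<forall>x\<in>A. \<forall>y\<in>A. dist x y \<le> 1" and "x \<in> A" "y \<in> A" "x \<noteq> y"
  obtains p q e where "p \<in> A" and "q \<in> A" and "p \<noteq> q" and "\<forall>z\<in>A. 0 < z \<bullet> e"
    and "third_turn_compatible p q e"
proof -
  have near: "1/2 \<le> z \<bullet> w" if "z \<in> A" "w \<in> A" for z w
    using inner_ge_half_if_dist_le_1 unit small that by blast
  have "x \<noteq> 0"
    using unit \<open>x \<in> A\<close> by auto
  moreover have "\<forall>z\<in>A. 0 \<le> z \<bullet> x"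
    using near[OF _ \<open>x \<in> A\<close>] by fastforce
  ultimately obtain p e where "p \<in> A" "e \<noteq> 0" "supporting_normal A p e"
    using exists_supporting_normal[OF \<open>compact A\<close> unit \<open>x \<in> A\<close> \<open>y \<in> A\<close> \<open>x \<noteq> y\<close>] by blast
  obtain z where "z \<in> A" "z \<noteq> p"
    using \<open>x \<in> A\<close> \<open>y \<in> A\<close> \<open>x \<noteq> y\<close> by blast
  obtain v q where v: "supporting_normal A p v" and "q \<in> A" "q \<noteq> p"
    and shallow: "4 * (q \<bullet> v)\<^sup>2 < (norm (q - p))\<^sup>2 * (v \<bullet> v)"
    using exists_shallow_supporting_normal[OF \<open>DIM('a) \<ge> 3\<close> \<open>z \<in> A\<close> \<open>z \<noteq> p\<close> \<open>e \<noteq> 0\<close>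
        \<open>supporting_normal A p e\<close>] by blast
  have start: "(norm (p - q))\<^sup>2 * (x \<bullet> x) < 3 * ((p + q) \<bullet> x)\<^sup>2"
  proof -
    have "(norm (p - q))\<^sup>2 \<le> 1"
      using small \<open>p \<in> A\<close> \<open>q \<in> A\<close> by (simp add: dist_norm power_le_one)
    moreover have "1 \<le> ((p + q) \<bullet> x)\<^sup>2"
      using near[OF \<open>p \<in> A\<close> \<open>x \<in> A\<close>] near[OF \<open>q \<in> A\<close> \<open>x \<in> A\<close>]
      by (intro one_le_power) (simp add: inner_add_left)
    moreover have "x \<bullet> x = 1"
      using unit \<open>x \<in> A\<close> by (simp add: norm_eq_1)
    ultimately show ?thesis
      by simp
  qed
  have "p \<bullet> v = 0"
    using v by (simp add: supporting_normal_def inner_commute)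
  then obtain t where "0 \<le> t" "t < 1"
    and compatible: "third_turn_compatible p q ((1 - t) *\<^sub>R x + t *\<^sub>R v)"
    using exists_third_turn_compatible_between[OF start _ shallow] by blast
  have "\<forall>z\<in>A. 0 < z \<bullet> ((1 - t) *\<^sub>R x + t *\<^sub>R v)"
  proof
    fix z assume "z \<in> A"
    have "0 < (1 - t) * (z \<bullet> x)"
      using near[OF \<open>z \<in> A\<close> \<open>x \<in> A\<close>] \<open>t < 1\<close> by simp
    moreover have "0 \<le> t * (z \<bullet> v)"
      using v \<open>z \<in> A\<close> \<open>0 \<le> t\<close> by (simp add: supporting_normal_def)
    ultimately show "0 < z \<bullet> ((1 - t) *\<^sub>R x + t *\<^sub>R v)"
      by (simp add: inner_add_right)
  qed
  with \<open>p \<in> A\<close> \<open>q \<in> A\<close> \<open>q \<noteq> p\<close> compatible show ?thesis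
    by (intro that) auto
qed

lemma linked_not_centered_if_orbit_sum_zero:
  fixes f :: "'a::real_inner \<Rightarrow> 'a"
  assumes "p \<in> A" and "q \<in> A" and "f p = q" and cube: "\<And>x. f (f (f x)) = x"
    and pos: "\<And>x. x \<in> A \<Longrightarrow> 0 < x \<bullet> e"
    and orbit_sum: "\<And>x. x \<bullet> e + f x \<bullet> e + f (f x) \<bullet> e = 0"
  shows "A \<inter> f ` A \<noteq> {} \<and> A \<inter> (f \<circ> f) ` A \<noteq> {} \<and>
         f ` A \<inter> (f \<circ> f) ` A \<noteq> {} \<and> A \<inter> f ` A \<inter> (f \<circ> f) ` A = {}"
proof (intro conjI)
  show "A \<inter> f ` A \<noteq> {}"
    using \<open>q \<in> A\<close> \<open>p \<in> A\<close> \<open>f p = q\<close> by blast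
  show "A \<inter> (f \<circ> f) ` A \<noteq> {}"
    using \<open>p \<in> A\<close> \<open>q \<in> A\<close> cube[of p] \<open>f p = q\<close> by force
  show "f ` A \<inter> (f \<circ> f) ` A \<noteq> {}"
    using \<open>p \<in> A\<close> \<open>q \<in> A\<close> \<open>f p = q\<close> by force
  show "A \<inter> f ` A \<inter> (f \<circ> f) ` A = {}"
  proof (rule equals0I)
    fix z assume z: "z \<in> A \<inter> f ` A \<inter> (f \<circ> f) ` A"
    then obtain y y' where "y \<in> A" "y' \<in> A" "z = f y" "z = f (f y')"
      by auto
    then have "f (f z) \<in> A" "f z \<in> A"
      by (metis cube)+
    then have "0 < z \<bullet> e + f z \<bullet> e + f (f z) \<bullet> e"
      using z pos[of z] pos[of "f z"] pos[of "f (f z)"] by simp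
    with orbit_sum show False
      by simp
  qed
qed

lemma diameter_pos_obtains_distinct:
  assumes "0 < diameter S"
  obtains x y where "x \<in> S" and "y \<in> S" and "x \<noteq> y"
proof -
  obtain x where "x \<in> S"
    using assms by fastforce
  moreover have "S \<noteq> {x}"
    using assms by fastforce
  ultimately show thesis
    using that by blast
qed

theorem theorem2p1:
  fixes A :: "(real^'n) set"
  assumes "CARD('n) \<ge> 3"
    and "A \<subseteq> unit_sphere"
    and "closed A"
    and "0 < diameter A" and "diameter A \<le> 1"
  shows "\<exists>f \<in> SO.
           A \<inter> f ` A \<noteq> {} \<and> A \<inter> (f \<circ> f) ` A \<noteq> {} \<and>
           f ` A \<inter> (f \<circ> f) ` A \<noteq> {} \<and>
           A \<inter> f ` A \<inter> (f \<circ> f) ` A = {}"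
proof -
  have unit: "\<forall>x\<in>A. norm x = 1"
    using \<open>A \<subseteq> unit_sphere\<close> by (auto simp: unit_sphere_def)
  then have "bounded A"
    by (auto simp: bounded_iff)
  then have "compact A"
    using \<open>closed A\<close> by (simp add: compact_eq_bounded_closed)
  have small: "\<forall>x\<in>A. \<forall>y\<in>A. dist x y \<le> 1"
    using diameter_bounded_bound[OF \<open>bounded A\<close>] \<open>diameter A \<le> 1\<close> by (meson order_trans)
  obtain x y where "x \<in> A" "y \<in> A" "x \<noteq> y"
    using diameter_pos_obtains_distinct[OF \<open>0 < diameter A\<close>] .
  moreover have "DIM(real^'n) \<ge> 3"
    using \<open>CARD('n) \<ge> 3\<close> by simp
  ultimately obtain p q e where "p \<in> A" "q \<in> A" "p \<noteq> q" and pos: "\<forall>z\<in>A. 0 < z \<bullet> e"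
    and "third_turn_compatible p q e"
    using exists_positive_third_turn_compatible[OF _ \<open>compact A\<close> unit small] by metis
  moreover have "0 < (p + q) \<bullet> e"
    using pos \<open>p \<in> A\<close> \<open>q \<in> A\<close> by (simp add: inner_add_left add_pos_pos)
  moreover have "norm p = norm q"
    using unit \<open>p \<in> A\<close> \<open>q \<in> A\<close> by simp
  ultimately obtain a b u v where ab: "orthonormal_pair a b" and e: "e = u *\<^sub>R a + v *\<^sub>R b"
    and pq: "plane_rotation a b (2*pi/3) p = q"
    using exists_third_turn_rotation by metis
  show ?thesis
  proof (rule bexI)
    show "plane_rotation a b (2*pi/3) \<in> SO"
      by (rule plane_rotation_in_SO[OF ab])
  qed (rule linked_not_centered_if_orbit_sum_zero[OF \<open>p \<in> A\<close> \<open>q \<in> A\<close> pq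
        orthonormal_pair.plane_rotation_third_turn_cube[OF ab] pos[rule_format]
        orthonormal_pair.plane_rotation_third_turn_orbit_sum[OF ab e]])
qed

end
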